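(* For every closed $\mathcal L$-term $t$, neither the code of the sentence $\mathrm Pt$ nor the code of the sentence $\neg\mathrm Pt$ belongs to $P_\infty^+$, where $(T_\infty,P_\infty)$ is the least fixed point of $\Gamma_{\mathscr{TP}}$ (the stage at which the sequence $(T_\alpha,P_\alpha)$ stabilizes).
   Context: Language. Let $\mathcal L_{\mathbb N}$ be the language of first-order Peano arithmetic and $\mathcal L=\mathcal L_{\mathbb N}\cup\{\mathrm T,\mathrm P\}$ with unary predicates $\mathrm T,\mathrm P$. $\mathcal L$-formulas are in Tait style: literals are $s=t$, $s\neq t$, $\mathrm Tt$, $\neg\mathrm Tt$, $\mathrm Pt$, $\neg\mathrm Pt$; formulas are built from literals by $\wedge,\vee,\forall,\exists$; negation of an arbitrary formula is defined by De Morgan dualities with $\neg\neg\varphi:=\varphi$. A standard Gödel numbering is fixed; $\#e$ is the code of $e$, $\ulcorner e\urcorner$ the numeral of $\#e$, $\mathrm{val}(t)$ the value of a closed term $t$, $\dot\neg$ the primitive recursive function with $\dot\neg(\#\varphi)=\#\neg\varphi$; $\mathrm T\varphi,\mathrm P\varphi$ abbreviate $\mathrm T\ulcorner\varphi\urcorner,\mathrm P\ulcorner\varphi\urcorner$. Semantics. A partial model is $(\mathbb N,T,P)$ with $\mathbb N$ the standard model and $T=(T^+,T^-)$, $P=(P^+,P^-)$ pairs of subsets of $\omega$. Strong Kleene satisfaction $\models_{SK}$: arithmetic literals evaluated in $\mathbb N$; $\mathrm Tt$ satisfied iff $\mathrm{val}(t)\in T^+$, $\neg\mathrm Tt$ iff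 $\mathrm{val}(t)\in T^-$, likewise for $\mathrm P$ with $P^\pm$; conjunction iff both, disjunction iff at least one, $\forall x\varphi(x)$ iff all numeral instances, $\exists x\varphi(x)$ iff some numeral instance. Base paradoxicality. $\mathrm{PA}[\mathrm{SK}]$ is the two-sided sequent calculus for Strong Kleene logic with identity in $\mathcal L$ (initial sequents $\varphi\Rightarrow\varphi$, cut, weakening, the rule from $\Gamma\Rightarrow\Delta,\varphi$ infer $\neg\varphi,\Gamma\Rightarrow\Delta$, usual rules for $\wedge,\vee,\forall,\exists$, reflexivity $\Rightarrow t=t$, replacement from $\Gamma\Rightarrow\Delta,\varphi(t)$ infer $\Gamma\Rightarrow\Delta,s\neq t,\varphi(s)$) plus the initial sequents of Peano arithmetic and the induction rule for all $\mathcal L$-formulas. A sentence $\varphi$ is base paradoxical iff $\mathrm{PA}[\mathrm{SK}]$ derives $\varphi\Leftrightarrow\neg\mathrm T\varphi$ and $\neg\varphi\Leftrightarrow\mathrm T\varphi$ ($\Leftrightarrow$ meaning both sequents). $B(x)$ is an $\mathcal L_{\mathbb N}$-formula defining in $\mathbb N$ the set of codes of base paradoxical sentences, and $\Pi(x):=B(x)\vee B(\dot\neg x)$. Jump and sequence. Let $\mathscr P(x)$ be the $\mathcal L$-formula which is the disjunction of: (1) $x$ codes a sentence and $\Pi(x)$; (2) $x$ codes a sentence $\mathrm Tt$ ($t$ a closed term) and $\mathrm P(\mathrm{val}(t))$; (3) $x$ codes a sentence $\neg\mathrm Tt$ and $\mathrm P(\mathrm{val}(t))$; (4) $x$ codes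 a sentence $\psi\wedge\theta$ and $(\mathrm P\psi\wedge\mathrm P\theta)\vee(\mathrm T\psi\wedge\mathrm P\theta)\vee(\mathrm T\theta\wedge\mathrm P\psi)$; (5) $x$ codes a sentence $\psi\vee\theta$ and $(\mathrm P\psi\wedge\mathrm P\theta)\vee(\neg\mathrm T\psi\wedge\mathrm P\theta)\vee(\neg\mathrm T\theta\wedge\mathrm P\psi)$; (6) $x$ codes a sentence $\forall v\psi$ and $\exists y\,\mathrm P\psi(\dot y)\wedge\forall y(\mathrm P\psi(\dot y)\vee\mathrm T\psi(\dot y))$; (7) $x$ codes a sentence $\exists v\psi$ and $\exists y\,\mathrm P\psi(\dot y)\wedge\forall y(\mathrm P\psi(\dot y)\vee\neg\mathrm T\psi(\dot y))$; here $\psi(\dot y)$ is the code of the result of substituting the numeral of $y$ for $v$. Write $\mathscr P(\varphi)$ for $\mathscr P(\ulcorner\varphi\urcorner)$. Define $\Gamma_{\mathscr{TP}}(T,P)=\big((\{\#\varphi:(\mathbb N,T,P)\models_{SK}\varphi\},\{\#\varphi:(\mathbb N,T,P)\models_{SK}\neg\varphi\}),(\{\#\varphi:(\mathbb N,T,P)\models_{SK}\mathscr P(\varphi)\},\{\#\varphi:(\mathbb N,T,P)\models_{SK}\varphi\vee\neg\varphi\})\big)$, $\varphi$ ranging over $\mathcal L$-sentences. Define $(T_0,P_0)=((\emptyset,\emptyset),(\emptyset,\emptyset))$, $(T_{\beta+1},P_{\beta+1})=\Gamma_{\mathscr{TP}}(T_\beta,P_\beta)$, $(T_\lambda,P_\lambda)=\bigcup_{\beta<\lambda}(T_\beta,P_\beta)$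 (componentwise union) for limit $\lambda$. This sequence reaches a fixed point $(T_\infty,P_\infty)$, $P_\infty=(P_\infty^+,P_\infty^-)$. *)

theory Defs
  imports Main "HOL-Library.Nat_Bijection" "HOL-Library.Product_Order"
begin

section \<open>Syntax of the language L = L_N + {T, P} (Tait style)\<close>

datatype tm = TVar nat | TZero | TSuc tm | TPlus tm tm | TTimes tm tm

datatype fm =
    FEq tm tm | FNeq tm tm
  | FT tm | FNT tm
  | FP tm | FNP tm
  | FAnd fm fm | FOr fm fm
  | FAll nat fm | FEx nat fm

fun neg :: "fm \<Rightarrow> fm" where
  "neg (FEq s t) = FNeq s t"
| "neg (FNeq s t) = FEq s t"
| "neg (FT t) = FNT t"
| "neg (FNT t) = FT t"
| "neg (FP t) = FNP t"
| "neg (FNP t) = FP t"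
| "neg (FAnd a b) = FOr (neg a) (neg b)"
| "neg (FOr a b) = FAnd (neg a) (neg b)"
| "neg (FAll x a) = FEx x (neg a)"
| "neg (FEx x a) = FAll x (neg a)"

fun tvars :: "tm \<Rightarrow> nat set" where
  "tvars (TVar n) = {n}"
| "tvars TZero = {}"
| "tvars (TSuc t) = tvars t"
| "tvars (TPlus s t) = tvars s \<union> tvars t"
| "tvars (TTimes s t) = tvars s \<union> tvars t"

fun fvars :: "fm \<Rightarrow> nat set" where
  "fvars (FEq s t) = tvars s \<union> tvars t"
| "fvars (FNeq s t) = tvars s \<union> tvars t"
| "fvars (FT t) = tvars t"
| "fvars (FNT t) = tvars t"
| "fvars (FP t) = tvars t"
| "fvars (FNP t) = tvars t"
| "fvars (FAnd a b) = fvars a \<union> fvars b"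
| "fvars (FOr a b) = fvars a \<union> fvars b"
| "fvars (FAll x a) = fvars a - {x}"
| "fvars (FEx x a) = fvars a - {x}"

definition closed :: "tm \<Rightarrow> bool" where
  "closed t \<longleftrightarrow> tvars t = {}"

definition sentence :: "fm \<Rightarrow> bool" where
  "sentence \<phi> \<longleftrightarrow> fvars \<phi> = {}"

fun tsubst :: "tm \<Rightarrow> nat \<Rightarrow> tm \<Rightarrow> tm" where
  "tsubst (TVar n) x u = (if n = x then u else TVar n)"
| "tsubst TZero x u = TZero"
| "tsubst (TSuc t) x u = TSuc (tsubst t x u)"
| "tsubst (TPlus s t) x u = TPlus (tsubst s x u) (tsubst t x u)"
| "tsubst (TTimes s t) x u = TTimes (tsubst s x u) (tsubst t x u)"

fun fsubst :: "fm \<Rightarrow> nat \<Rightarrow> tm \<Rightarrow> fm" where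
  "fsubst (FEq s t) x u = FEq (tsubst s x u) (tsubst t x u)"
| "fsubst (FNeq s t) x u = FNeq (tsubst s x u) (tsubst t x u)"
| "fsubst (FT t) x u = FT (tsubst t x u)"
| "fsubst (FNT t) x u = FNT (tsubst t x u)"
| "fsubst (FP t) x u = FP (tsubst t x u)"
| "fsubst (FNP t) x u = FNP (tsubst t x u)"
| "fsubst (FAnd a b) x u = FAnd (fsubst a x u) (fsubst b x u)"
| "fsubst (FOr a b) x u = FOr (fsubst a x u) (fsubst b x u)"
| "fsubst (FAll y a) x u = (if y = x then FAll y a else FAll y (fsubst a x u))"
| "fsubst (FEx y a) x u = (if y = x then FEx y a else FEx y (fsubst a x u))"

lemma size_fsubst [simp]: "size (fsubst a x u) = size a"
  by (induction a) auto

fun free_for :: "tm \<Rightarrow> nat \<Rightarrow> fm \<Rightarrow> bool" where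
  "free_for u x (FAnd a b) = (free_for u x a \<and> free_for u x b)"
| "free_for u x (FOr a b) = (free_for u x a \<and> free_for u x b)"
| "free_for u x (FAll y a) = (x \<notin> fvars (FAll y a) \<or> (y \<notin> tvars u \<and> free_for u x a))"
| "free_for u x (FEx y a) = (x \<notin> fvars (FEx y a) \<or> (y \<notin> tvars u \<and> free_for u x a))"
| "free_for u x _ = True"

fun num :: "nat \<Rightarrow> tm" where
  "num 0 = TZero"
| "num (Suc n) = TSuc (num n)"

text \<open>Value of a (closed) term in the standard model; variables get 0 (irrelevant for closed terms).\<close>
fun val :: "tm \<Rightarrow> nat" where
  "val (TVar n) = 0"
| "val TZero = 0"
| "val (TSuc t) = Suc (val t)"
| "val (TPlus s t) = val s + val t"
| "val (TTimes s t) = val s * val t"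

fun tcode :: "tm \<Rightarrow> nat" where
  "tcode (TVar n) = prod_encode (0, n)"
| "tcode TZero = prod_encode (1, 0)"
| "tcode (TSuc t) = prod_encode (2, tcode t)"
| "tcode (TPlus s t) = prod_encode (3, prod_encode (tcode s, tcode t))"
| "tcode (TTimes s t) = prod_encode (4, prod_encode (tcode s, tcode t))"

fun code :: "fm \<Rightarrow> nat" where
  "code (FEq s t) = prod_encode (0, prod_encode (tcode s, tcode t))"
| "code (FNeq s t) = prod_encode (1, prod_encode (tcode s, tcode t))"
| "code (FT t) = prod_encode (2, tcode t)"
| "code (FNT t) = prod_encode (3, tcode t)"
| "code (FP t) = prod_encode (4, tcode t)"
| "code (FNP t) = prod_encode (5, tcode t)"
| "code (FAnd a b) = prod_encode (6, prod_encode (code a, code b))"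
| "code (FOr a b) = prod_encode (7, prod_encode (code a, code b))"
| "code (FAll x a) = prod_encode (8, prod_encode (x, code a))"
| "code (FEx x a) = prod_encode (9, prod_encode (x, code a))"

definition quote :: "fm \<Rightarrow> tm" where
  "quote \<phi> = num (code \<phi>)"

section \<open>Strong Kleene satisfaction in (N, T, P), for sentences\<close>

type_synonym pint = "nat set \<times> nat set"  (* (extension, anti-extension) *)

function sat :: "pint \<Rightarrow> pint \<Rightarrow> fm \<Rightarrow> bool" where
  "sat T P (FEq s t) = (val s = val t)"
| "sat T P (FNeq s t) = (val s \<noteq> val t)"
| "sat T P (FT t) = (val t \<in> fst T)"
| "sat T P (FNT t) = (val t \<in> snd T)"
| "sat T P (FP t) = (val t \<in> fst P)"
| "sat T P (FNP t) = (val t \<in> snd P)"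
| "sat T P (FAnd a b) = (sat T P a \<and> sat T P b)"
| "sat T P (FOr a b) = (sat T P a \<or> sat T P b)"
| "sat T P (FAll x a) = (\<forall>n. sat T P (fsubst a x (num n)))"
| "sat T P (FEx x a) = (\<exists>n. sat T P (fsubst a x (num n)))"
  by pat_completeness auto
termination
  by (relation "measure (\<lambda>(T, P, \<phi>). size \<phi>)") auto

definition fvs :: "fm set \<Rightarrow> nat set" where
  "fvs \<Gamma> = (\<Union>\<phi>\<in>\<Gamma>. fvars \<phi>)"

inductive derivable :: "fm set \<Rightarrow> fm set \<Rightarrow> bool" where
  init: "derivable {\<phi>} {\<phi>}"
| cut: "derivable \<Gamma> (\<Delta> \<union> {\<phi>}) \<Longrightarrow> derivable (\<Gamma> \<union> {\<phi>}) \<Delta> \<Longrightarrow> derivable \<Gamma> \<Delta>"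
| weak: "derivable \<Gamma> \<Delta> \<Longrightarrow> \<Gamma> \<subseteq> \<Gamma>' \<Longrightarrow> \<Delta> \<subseteq> \<Delta>' \<Longrightarrow> finite \<Gamma>' \<Longrightarrow> finite \<Delta>'
          \<Longrightarrow> derivable \<Gamma>' \<Delta>'"
| negL: "derivable \<Gamma> (\<Delta> \<union> {\<phi>}) \<Longrightarrow> derivable (\<Gamma> \<union> {neg \<phi>}) \<Delta>"
| andR: "derivable \<Gamma> (\<Delta> \<union> {\<phi>}) \<Longrightarrow> derivable \<Gamma> (\<Delta> \<union> {\<psi>})
          \<Longrightarrow> derivable \<Gamma> (\<Delta> \<union> {FAnd \<phi> \<psi>})"
| andL: "derivable (\<Gamma> \<union> {\<phi>, \<psi>}) \<Delta> \<Longrightarrow> derivable (\<Gamma> \<union> {FAnd \<phi> \<psi>}) \<Delta>"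
| orR: "derivable \<Gamma> (\<Delta> \<union> {\<phi>, \<psi>}) \<Longrightarrow> derivable \<Gamma> (\<Delta> \<union> {FOr \<phi> \<psi>})"
| orL: "derivable (\<Gamma> \<union> {\<phi>}) \<Delta> \<Longrightarrow> derivable (\<Gamma> \<union> {\<psi>}) \<Delta>
          \<Longrightarrow> derivable (\<Gamma> \<union> {FOr \<phi> \<psi>}) \<Delta>"
| allR: "derivable \<Gamma> (\<Delta> \<union> {fsubst \<phi> x (TVar y)}) \<Longrightarrow> free_for (TVar y) x \<phi>
          \<Longrightarrow> y \<notin> fvs \<Gamma> \<Longrightarrow> y \<notin> fvs \<Delta> \<Longrightarrow> y \<notin> fvars (FAll x \<phi>)
          \<Longrightarrow> derivable \<Gamma> (\<Delta> \<union> {FAll x \<phi>})"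
| allL: "derivable (\<Gamma> \<union> {fsubst \<phi> x t}) \<Delta> \<Longrightarrow> free_for t x \<phi>
          \<Longrightarrow> derivable (\<Gamma> \<union> {FAll x \<phi>}) \<Delta>"
| exR: "derivable \<Gamma> (\<Delta> \<union> {fsubst \<phi> x t}) \<Longrightarrow> free_for t x \<phi>
          \<Longrightarrow> derivable \<Gamma> (\<Delta> \<union> {FEx x \<phi>})"
| exL: "derivable (\<Gamma> \<union> {fsubst \<phi> x (TVar y)}) \<Delta> \<Longrightarrow> free_for (TVar y) x \<phi>
          \<Longrightarrow> y \<notin> fvs \<Gamma> \<Longrightarrow> y \<notin> fvs \<Delta> \<Longrightarrow> y \<notin> fvars (FEx x \<phi>)
          \<Longrightarrow> derivable (\<Gamma> \<union> {FEx x \<phi>}) \<Delta>"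
| refl: "derivable {} {FEq t t}"
| repl: "derivable \<Gamma> (\<Delta> \<union> {fsubst \<phi> x t}) \<Longrightarrow> free_for t x \<phi> \<Longrightarrow> free_for s x \<phi>
          \<Longrightarrow> derivable \<Gamma> (\<Delta> \<union> {FNeq s t, fsubst \<phi> x s})"
| pa1: "derivable {FEq (TSuc s) TZero} {}"
| pa2: "derivable {FEq (TSuc s) (TSuc t)} {FEq s t}"
| pa3: "derivable {} {FEq (TPlus s TZero) s}"
| pa4: "derivable {} {FEq (TPlus s (TSuc t)) (TSuc (TPlus s t))}"
| pa5: "derivable {} {FEq (TTimes s TZero) TZero}"
| pa6: "derivable {} {FEq (TTimes s (TSuc t)) (TPlus (TTimes s t) s)}"
| ind: "derivable (\<Gamma> \<union> {\<phi>}) (\<Delta> \<union> {fsubst \<phi> x (TSuc (TVar x))})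
          \<Longrightarrow> x \<notin> fvs \<Gamma> \<Longrightarrow> x \<notin> fvs \<Delta> \<Longrightarrow> free_for t x \<phi>
          \<Longrightarrow> derivable (\<Gamma> \<union> {fsubst \<phi> x TZero}) (\<Delta> \<union> {fsubst \<phi> x t})"

definition base_paradoxical :: "fm \<Rightarrow> bool" where
  "base_paradoxical \<phi> \<longleftrightarrow> sentence \<phi>
     \<and> derivable {\<phi>} {FNT (quote \<phi>)} \<and> derivable {FNT (quote \<phi>)} {\<phi>}
     \<and> derivable {neg \<phi>} {FT (quote \<phi>)} \<and> derivable {FT (quote \<phi>)} {neg \<phi>}"

text \<open>Clause (1): Pi(#phi) = B(#phi) or B(dot-neg #phi) = B(#phi) or B(#(neg phi)),
  where B defines in N the set of codes of base paradoxical sentences.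
  The remaining clauses are the SK-evaluation of clauses (2)-(7).\<close>
definition satP :: "pint \<Rightarrow> pint \<Rightarrow> fm \<Rightarrow> bool" where
  "satP T P \<phi> \<longleftrightarrow>
     (sentence \<phi> \<and> (base_paradoxical \<phi> \<or> base_paradoxical (neg \<phi>)))
   \<or> (\<exists>t. closed t \<and> \<phi> = FT t \<and> val t \<in> fst P)
   \<or> (\<exists>t. closed t \<and> \<phi> = FNT t \<and> val t \<in> fst P)
   \<or> (\<exists>\<psi> \<theta>. sentence \<phi> \<and> \<phi> = FAnd \<psi> \<theta> \<and>
        ((code \<psi> \<in> fst P \<and> code \<theta> \<in> fst P) \<or> (code \<psi> \<in> fst T \<and> code \<theta> \<in> fst P)
         \<or> (code \<theta> \<in> fst T \<and> code \<psi> \<in> fst P)))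
   \<or> (\<exists>\<psi> \<theta>. sentence \<phi> \<and> \<phi> = FOr \<psi> \<theta> \<and>
        ((code \<psi> \<in> fst P \<and> code \<theta> \<in> fst P) \<or> (code \<psi> \<in> snd T \<and> code \<theta> \<in> fst P)
         \<or> (code \<theta> \<in> snd T \<and> code \<psi> \<in> fst P)))
   \<or> (\<exists>v \<psi>. sentence \<phi> \<and> \<phi> = FAll v \<psi> \<and>
        (\<exists>y. code (fsubst \<psi> v (num y)) \<in> fst P) \<and>
        (\<forall>y. code (fsubst \<psi> v (num y)) \<in> fst P \<or> code (fsubst \<psi> v (num y)) \<in> fst T))
   \<or> (\<exists>v \<psi>. sentence \<phi> \<and> \<phi> = FEx v \<psi> \<and>
        (\<exists>y. code (fsubst \<psi> v (num y)) \<in> fst P) \<and>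
        (\<forall>y. code (fsubst \<psi> v (num y)) \<in> fst P \<or> code (fsubst \<psi> v (num y)) \<in> snd T))"

definition GammaTP :: "pint \<times> pint \<Rightarrow> pint \<times> pint" where
  "GammaTP TP = (let T = fst TP; P = snd TP in
     (({code \<phi> | \<phi>. sentence \<phi> \<and> sat T P \<phi>},
       {code \<phi> | \<phi>. sentence \<phi> \<and> sat T P (neg \<phi>)}),
      ({code \<phi> | \<phi>. sentence \<phi> \<and> satP T P \<phi>},
       {code \<phi> | \<phi>. sentence \<phi> \<and> sat T P (FOr \<phi> (neg \<phi>))})))"

definition TPinf :: "pint \<times> pint" where
  "TPinf = lfp GammaTP"

definition Pinf_plus :: "nat set" where
  "Pinf_plus = fst (snd TPinf)"

end

theory Submission
  imports Defs
begin

text \<open>The jump puts the code of a sentence into \<open>P\<^sup>+\<close> only if the sentence is base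
  paradoxical, a negation of one, a \<open>T\<close>-literal or compound. The literals \<open>P t\<close> and
  \<open>\<not>P t\<close> are none of these: \<open>PA[SK]\<close> is sound for classical semantics with
  arbitrary interpretations of \<open>T\<close> and \<open>P\<close>, and interpreting \<open>P\<close> as empty and \<open>T\<close> as
  empty (resp. full) refutes the sequent \<open>\<not>T\<ulcorner>P t\<urcorner> \<Rightarrow> P t\<close>
  (resp. \<open>\<not>P t \<Rightarrow> \<not>T\<ulcorner>\<not>P t\<urcorner>\<close>). So no application of the jump yields these codes,
  and the least fixed point lies below the prefixed point that omits them.\<close>

fun teval :: "(nat \<Rightarrow> nat) \<Rightarrow> tm \<Rightarrow> nat" where
  "teval e (TVar n) = e n"
| "teval e TZero = 0"
| "teval e (TSuc t) = Suc (teval e t)"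
| "teval e (TPlus s t) = teval e s + teval e t"
| "teval e (TTimes s t) = teval e s * teval e t"

fun holds :: "nat set \<Rightarrow> nat set \<Rightarrow> (nat \<Rightarrow> nat) \<Rightarrow> fm \<Rightarrow> bool" where
  "holds A B e (FEq s t) = (teval e s = teval e t)"
| "holds A B e (FNeq s t) = (teval e s \<noteq> teval e t)"
| "holds A B e (FT t) = (teval e t \<in> A)"
| "holds A B e (FNT t) = (teval e t \<notin> A)"
| "holds A B e (FP t) = (teval e t \<in> B)"
| "holds A B e (FNP t) = (teval e t \<notin> B)"
| "holds A B e (FAnd a b) = (holds A B e a \<and> holds A B e b)"
| "holds A B e (FOr a b) = (holds A B e a \<or> holds A B e b)"
| "holds A B e (FAll x a) = (\<forall>n. holds A B (e(x := n)) a)"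
| "holds A B e (FEx x a) = (\<exists>n. holds A B (e(x := n)) a)"

lemma holds_neg [simp]: "holds A B e (neg \<phi>) \<longleftrightarrow> \<not> holds A B e \<phi>"
  by (induction \<phi> arbitrary: e) auto

lemma teval_cong: "(\<And>v. v \<in> tvars t \<Longrightarrow> e v = e' v) \<Longrightarrow> teval e t = teval e' t"
  by (induction t) auto

lemma holds_cong: "(\<And>v. v \<in> fvars \<phi> \<Longrightarrow> e v = e' v) \<Longrightarrow> holds A B e \<phi> = holds A B e' \<phi>"
proof (induction \<phi> arbitrary: e e')
  case (FAll x a)
  then have "holds A B (e(x := n)) a = holds A B (e'(x := n)) a" for n
    by (intro FAll.IH) auto
  then show ?case by simp
next
  case (FEx x a)
  then have "holds A B (e(x := n)) a = holds A B (e'(x := n)) a" for n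
    by (intro FEx.IH) auto
  then show ?case by simp
next
  case (FAnd a b)
  then show ?case by (metis Un_iff fvars.simps(7) holds.simps(7))
next
  case (FOr a b)
  then show ?case by (metis Un_iff fvars.simps(8) holds.simps(8))
qed (simp; metis Un_iff teval_cong)+

lemma teval_upd_fresh: "x \<notin> tvars t \<Longrightarrow> teval (e(x := n)) t = teval e t"
  by (rule teval_cong) auto

lemma holds_upd_fresh: "x \<notin> fvars \<phi> \<Longrightarrow> holds A B (e(x := n)) \<phi> = holds A B e \<phi>"
  by (rule holds_cong) auto

lemma tsubst_fresh: "x \<notin> tvars t \<Longrightarrow> tsubst t x u = t"
  by (induction t) auto

lemma fsubst_fresh: "x \<notin> fvars \<phi> \<Longrightarrow> fsubst \<phi> x u = \<phi>"
  by (induction \<phi>) (auto simp: tsubst_fresh)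

lemma teval_tsubst: "teval e (tsubst t x u) = teval (e(x := teval e u)) t"
  by (induction t) auto

lemma holds_fsubst:
  "free_for u x \<phi> \<Longrightarrow> holds A B e (fsubst \<phi> x u) = holds A B (e(x := teval e u)) \<phi>"
proof (induction \<phi> arbitrary: e)
  case (FAll y a)
  show ?case
  proof (cases "x \<in> fvars (FAll y a)")
    case False
    then show ?thesis by (simp only: fsubst_fresh[OF False] holds_upd_fresh[OF False])
  next
    case True
    with FAll.prems have "y \<noteq> x" "y \<notin> tvars u" "free_for u x a" by auto
    have "holds A B (e(y := n)) (fsubst a x u) = holds A B (e(x := teval e u, y := n)) a" for n
      using FAll.IH[OF \<open>free_for u x a\<close>, of "e(y := n)"]
        teval_upd_fresh[OF \<open>y \<notin> tvars u\<close>] fun_upd_twist[OF \<open>y \<noteq> x\<close>] by metis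
    with \<open>y \<noteq> x\<close> show ?thesis by (simp only: fsubst.simps holds.simps if_False)
  qed
next
  case (FEx y a)
  show ?case
  proof (cases "x \<in> fvars (FEx y a)")
    case False
    then show ?thesis by (simp only: fsubst_fresh[OF False] holds_upd_fresh[OF False])
  next
    case True
    with FEx.prems have "y \<noteq> x" "y \<notin> tvars u" "free_for u x a" by auto
    have "holds A B (e(y := n)) (fsubst a x u) = holds A B (e(x := teval e u, y := n)) a" for n
      using FEx.IH[OF \<open>free_for u x a\<close>, of "e(y := n)"]
        teval_upd_fresh[OF \<open>y \<notin> tvars u\<close>] fun_upd_twist[OF \<open>y \<noteq> x\<close>] by metis
    with \<open>y \<noteq> x\<close> show ?thesis by (simp only: fsubst.simps holds.simps if_False)
  qed
qed (auto simp: teval_tsubst)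

lemma holds_fsubst_fresh_var:
  assumes "free_for (TVar y) x \<phi>" and "y \<notin> fvars \<phi> - {x}"
  shows "holds A B (e(y := n)) (fsubst \<phi> x (TVar y)) = holds A B (e(x := n)) \<phi>"
proof -
  have "holds A B (e(y := n)) (fsubst \<phi> x (TVar y)) = holds A B (e(y := n, x := n)) \<phi>"
    using assms(1) by (simp add: holds_fsubst)
  also have "\<dots> = holds A B (e(x := n)) \<phi>"
    using assms(2) by (intro holds_cong) auto
  finally show ?thesis .
qed

lemma holds_nat_induct:
  assumes "holds A B e (fsubst \<phi> x TZero)"
    and "\<And>n. holds A B (e(x := n)) \<phi> \<Longrightarrow> holds A B (e(x := n)) (fsubst \<phi> x (TSuc (TVar x)))"
  shows "holds A B (e(x := n)) \<phi>"
proof (induction n)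
  have "free_for TZero x \<phi>" by (induction \<phi>) auto
  with assms(1) show "holds A B (e(x := 0)) \<phi>" by (simp add: holds_fsubst)
next
  case (Suc n)
  have "free_for (TSuc (TVar x)) x \<phi>" by (induction \<phi>) auto
  with assms(2)[OF Suc] show "holds A B (e(x := Suc n)) \<phi>" by (simp add: holds_fsubst)
qed

definition valid :: "nat set \<Rightarrow> nat set \<Rightarrow> fm set \<Rightarrow> fm set \<Rightarrow> bool" where
  "valid A B \<Gamma> \<Delta> \<longleftrightarrow> (\<forall>e. (\<forall>\<phi>\<in>\<Gamma>. holds A B e \<phi>) \<longrightarrow> (\<exists>\<psi>\<in>\<Delta>. holds A B e \<psi>))"

lemma holds_upd_fresh_set:
  "y \<notin> fvs \<Gamma> \<Longrightarrow> \<phi> \<in> \<Gamma> \<Longrightarrow> holds A B (e(y := n)) \<phi> = holds A B e \<phi>"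
  unfolding fvs_def by (rule holds_upd_fresh) auto

lemma derivable_valid: "derivable \<Gamma> \<Delta> \<Longrightarrow> valid A B \<Gamma> \<Delta>"
proof (induction rule: derivable.induct)
  case (allR \<Gamma> \<Delta> \<phi> x y)
  show ?case unfolding valid_def
  proof (intro allI impI)
    fix e assume \<Gamma>: "\<forall>\<phi>\<in>\<Gamma>. holds A B e \<phi>"
    show "\<exists>\<psi>\<in>\<Delta> \<union> {FAll x \<phi>}. holds A B e \<psi>"
    proof (cases "\<exists>\<psi>\<in>\<Delta>. holds A B e \<psi>")
      case False
      have "holds A B (e(x := n)) \<phi>" for n
      proof -
        have "\<forall>\<phi>\<in>\<Gamma>. holds A B (e(y := n)) \<phi>" "\<forall>\<psi>\<in>\<Delta>. \<not> holds A B (e(y := n)) \<psi>"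
          using \<Gamma> False holds_upd_fresh_set[OF allR.hyps(3)] holds_upd_fresh_set[OF allR.hyps(4)]
          by auto
        then have "holds A B (e(y := n)) (fsubst \<phi> x (TVar y))"
          using allR.IH unfolding valid_def by blast
        with allR.hyps(2,5) show ?thesis by (simp add: holds_fsubst_fresh_var)
      qed
      then show ?thesis by simp
    qed blast
  qed
next
  case (exL \<Gamma> \<phi> x y \<Delta>)
  show ?case unfolding valid_def
  proof (intro allI impI)
    fix e assume \<Gamma>: "\<forall>\<phi>'\<in>\<Gamma> \<union> {FEx x \<phi>}. holds A B e \<phi>'"
    then obtain n where "holds A B (e(x := n)) \<phi>" by auto
    with exL.hyps(2,5) have "holds A B (e(y := n)) (fsubst \<phi> x (TVar y))"
      by (simp add: holds_fsubst_fresh_var)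
    moreover have "\<forall>\<phi>\<in>\<Gamma>. holds A B (e(y := n)) \<phi>"
      using \<Gamma> holds_upd_fresh_set[OF exL.hyps(3)] by blast
    ultimately obtain \<psi> where "\<psi> \<in> \<Delta>" "holds A B (e(y := n)) \<psi>"
      using exL.IH unfolding valid_def by blast
    then show "\<exists>\<psi>\<in>\<Delta>. holds A B e \<psi>" using holds_upd_fresh_set[OF exL.hyps(4)] by blast
  qed
next
  case (ind \<Gamma> \<phi> \<Delta> x t)
  show ?case unfolding valid_def
  proof (intro allI impI)
    fix e assume \<Gamma>: "\<forall>\<phi>'\<in>\<Gamma> \<union> {fsubst \<phi> x TZero}. holds A B e \<phi>'"
    show "\<exists>\<psi>\<in>\<Delta> \<union> {fsubst \<phi> x t}. holds A B e \<psi>"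
    proof (cases "\<exists>\<psi>\<in>\<Delta>. holds A B e \<psi>")
      case False
      have "holds A B (e(x := n)) \<phi>" for n
      proof (rule holds_nat_induct)
        show "holds A B e (fsubst \<phi> x TZero)" using \<Gamma> by simp
        fix n assume "holds A B (e(x := n)) \<phi>"
        moreover have "\<forall>\<phi>\<in>\<Gamma>. holds A B (e(x := n)) \<phi>" "\<forall>\<psi>\<in>\<Delta>. \<not> holds A B (e(x := n)) \<psi>"
          using \<Gamma> False holds_upd_fresh_set[OF ind.hyps(2)] holds_upd_fresh_set[OF ind.hyps(3)]
          by auto
        ultimately show "holds A B (e(x := n)) (fsubst \<phi> x (TSuc (TVar x)))"
          using ind.IH unfolding valid_def by blast
      qed
      with ind.hyps(4) show ?thesis by (simp add: holds_fsubst)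
    qed blast
  qed
qed (unfold valid_def, auto simp: holds_fsubst; blast)+

lemma not_base_paradoxical_FP: "\<not> base_paradoxical (FP t)"
proof
  assume "base_paradoxical (FP t)"
  then have "derivable {FNT (quote (FP t))} {FP t}" unfolding base_paradoxical_def by blast
  then have "valid {} {} {FNT (quote (FP t))} {FP t}" by (rule derivable_valid)
  then show False unfolding valid_def by simp
qed

lemma not_base_paradoxical_FNP: "\<not> base_paradoxical (FNP t)"
proof
  assume "base_paradoxical (FNP t)"
  then have "derivable {FNP t} {FNT (quote (FNP t))}" unfolding base_paradoxical_def by blast
  then have "valid UNIV {} {FNP t} {FNT (quote (FNP t))}" by (rule derivable_valid)
  then show False unfolding valid_def by simp
qed

lemma not_satP_FP: "\<not> satP T P (FP t)"
  unfolding satP_def using not_base_paradoxical_FP not_base_paradoxical_FNP by simp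

lemma not_satP_FNP: "\<not> satP T P (FNP t)"
  unfolding satP_def using not_base_paradoxical_FP not_base_paradoxical_FNP by simp

lemma inj_tcode: "inj tcode"
proof (rule injI)
  show "tcode s = tcode t \<Longrightarrow> s = t" for s t
    by (induction s arbitrary: t; case_tac t; auto simp: prod_encode_eq)
qed

lemma inj_code: "inj code"
proof (rule injI)
  show "code \<phi> = code \<psi> \<Longrightarrow> \<phi> = \<psi>" for \<phi> \<psi>
    by (induction \<phi> arbitrary: \<psi>; case_tac \<psi>; auto simp: prod_encode_eq inj_eq[OF inj_tcode])
qed

lemma GammaTP_P_plus: "fst (snd (GammaTP TP)) = code ` {\<phi>. sentence \<phi> \<and> satP (fst TP) (snd TP) \<phi>}"
  unfolding GammaTP_def Let_def by auto

lemma Pinf_plus_subset_GammaTP_P_plus: "Pinf_plus \<subseteq> (\<Union>TP. fst (snd (GammaTP TP)))"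
proof -
  define S :: "pint \<times> pint" where "S = ((UNIV, UNIV), (\<Union>TP. fst (snd (GammaTP TP)), UNIV))"
  have "GammaTP S \<le> S"
    unfolding S_def less_eq_prod_def by auto
  then have "TPinf \<le> S"
    unfolding TPinf_def by (rule lfp_lowerbound)
  then show ?thesis
    unfolding Pinf_plus_def S_def less_eq_prod_def by simp
qed

theorem mainTheorem9:
  fixes t :: tm
  assumes "closed t"
  shows "code (FP t) \<notin> Pinf_plus \<and> code (FNP t) \<notin> Pinf_plus"
proof -
  have "code (FP t) \<notin> fst (snd (GammaTP TP))" "code (FNP t) \<notin> fst (snd (GammaTP TP))" for TP
    unfolding GammaTP_P_plus inj_image_mem_iff[OF inj_code]
    using not_satP_FP not_satP_FNP by auto
  then show ?thesis
    using Pinf_plus_subset_GammaTP_P_plus by blast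
qed

end
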